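(* Let $G_0$ be a fixed $n\times l$ binary matrix, $G_1$ a fixed $n\times k$ binary matrix, $\mathbf m\in\{0,1\}^k$ fixed, and $1\le u\le n$. Then $$P(E=0\mid U=u)\le \min\left\{\frac{\sum_{w=d_0}^{u} B_{0,w}\binom{n-w}{u-w}}{\binom{n}{u}},\;1\right\}.$$
   Context: All arithmetic is over $\mathrm{GF}(2)$. $\mathcal C_0^{\perp}=\{\mathbf x\in\{0,1\}^n: G_0^T\mathbf x=\mathbf 0\}$; $B_{0,w}$ is the number of vectors of Hamming weight $w$ in $\mathcal C_0^\perp$, and $d_0$ is the minimum Hamming weight of a nonzero vector of $\mathcal C_0^\perp$ (empty sums are $0$). Defect model: each of the $n$ memory cells is independently defective with probability $\beta\in(0,1)$; a defective cell is stuck at $0$ or at $1$, each with probability $1/2$, independently. Let $\mathcal U$ be the set of defect positions, $U=|\mathcal U|$, $\mathbf s^{\mathcal U}$ the vector of stuck-at values; conditionally on $U=u$, $\mathcal U$ is a uniform random $u$-subset and $\mathbf s^{\mathcal U}$ is uniform on $\{0,1\}^u$. For a matrix $M$ (resp. vector $\mathbf v$) with rows indexed by $\{1,\dots,n\}$, $M^{\mathcal U}$ (resp. $\mathbf v^{\mathcal U}$) denotes the rows indexed by $\mathcal U$. Encoding: with $\mathbf b^{\mathcal U}=(G_1\mathbf m)^{\mathcal U}+\mathbf s^{\mathcal U}$, look for $\mathbf d\in\{0,1\}^l$ with $G_0^{\mathcal U}\mathbf d=\mathbf b^{\mathcal U}$; $E=1$ if such $\mathbf d$ exists and $E=0$ (encoding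 failure) otherwise. *)

theory Defs
  imports Complex_Main "HOL-Library.Z2" "HOL-Library.FuncSet"
begin

text \<open>Binary vectors/matrices: entries in GF(2) = type bit. An n x l matrix is a function
  nat => nat => bit, indices 0..<n (rows) and 0..<l (columns).\<close>

definition hweight :: "nat \<Rightarrow> (nat \<Rightarrow> bit) \<Rightarrow> nat" where
  "hweight n x = card {i. i < n \<and> x i \<noteq> 0}"

definition dual_code :: "nat \<Rightarrow> nat \<Rightarrow> (nat \<Rightarrow> nat \<Rightarrow> bit) \<Rightarrow> (nat \<Rightarrow> bit) set" where
  "dual_code n l G0 = {x \<in> {0..<n} \<rightarrow>\<^sub>E UNIV. \<forall>j<l. (\<Sum>i<n. G0 i j * x i) = 0}"

definition B0 :: "nat \<Rightarrow> nat \<Rightarrow> (nat \<Rightarrow> nat \<Rightarrow> bit) \<Rightarrow> nat \<Rightarrow> nat" where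
  "B0 n l G0 w = card {x \<in> dual_code n l G0. hweight n x = w}"

text \<open>Minimum distance d0; convention d0 = n+1 if the dual code has no nonzero vector
  (so that the sum from d0 to u <= n is empty, i.e. 0).\<close>
definition d0 :: "nat \<Rightarrow> nat \<Rightarrow> (nat \<Rightarrow> nat \<Rightarrow> bit) \<Rightarrow> nat" where
  "d0 n l G0 = (if \<exists>x\<in>dual_code n l G0. hweight n x > 0
      then Min {hweight n x | x. x \<in> dual_code n l G0 \<and> hweight n x > 0} else n + 1)"

text \<open>Outcomes given U = u: a u-subset S of the n cells (0-indexed) and stuck-at values
  s in {0,1}^S; all outcomes equally likely.\<close>
definition defect_outcomes :: "nat \<Rightarrow> nat \<Rightarrow> (nat set \<times> (nat \<Rightarrow> bit)) set" where
  "defect_outcomes n u = {(S, s). S \<subseteq> {0..<n} \<and> card S = u \<and> s \<in> S \<rightarrow>\<^sub>E UNIV}"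

definition encodable ::
  "nat \<Rightarrow> nat \<Rightarrow> (nat \<Rightarrow> nat \<Rightarrow> bit) \<Rightarrow> (nat \<Rightarrow> nat \<Rightarrow> bit) \<Rightarrow> (nat \<Rightarrow> bit)
    \<Rightarrow> nat set \<Rightarrow> (nat \<Rightarrow> bit) \<Rightarrow> bool" where
  "encodable l k G0 G1 m S s =
     (\<exists>d \<in> {0..<l} \<rightarrow>\<^sub>E UNIV. \<forall>i\<in>S. (\<Sum>j<l. G0 i j * d j) = (\<Sum>j<k. G1 i j * m j) + s i)"

definition fail_prob ::
  "nat \<Rightarrow> nat \<Rightarrow> nat \<Rightarrow> (nat \<Rightarrow> nat \<Rightarrow> bit) \<Rightarrow> (nat \<Rightarrow> nat \<Rightarrow> bit) \<Rightarrow> (nat \<Rightarrow> bit)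
    \<Rightarrow> nat \<Rightarrow> real" where
  "fail_prob n l k G0 G1 m u =
     real (card {(S, s) \<in> defect_outcomes n u. \<not> encodable l k G0 G1 m S s})
       / real (card (defect_outcomes n u))"

end

(* The system G0^S d = b^S is unsolvable exactly when some x supported in the defect set S
   satisfies x^T G0 = 0 and x^T b = 1 (Fredholm alternative).  Such an x, extended by zero,
   is a nonzero codeword of the dual code whose support lies in S.  Hence every failing
   outcome (S, s) contains the support of a dual codeword of weight w with 0 < w <= u, and
   a fixed support of weight w lies in (n - w choose u - w) of the (n choose u) defect sets.
   The union bound over dual codewords gives the estimate; the bound by 1 is trivial. *)
theory Submission
  imports Defs
begin

lemma fredholm_alternative:
  fixes G :: "nat \<Rightarrow> nat \<Rightarrow> 'a::field" and b :: "nat \<Rightarrow> 'a"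
  assumes "finite S"
  shows "(\<exists>d. \<forall>i\<in>S. (\<Sum>j<l. G i j * d j) = b i) \<or>
         (\<exists>x. (\<forall>j<l. (\<Sum>i\<in>S. x i * G i j) = 0) \<and> (\<Sum>i\<in>S. x i * b i) = 1)"
  using assms
proof (induction l arbitrary: S G b)
  case 0
  show ?case
  proof (cases "\<exists>r\<in>S. b r \<noteq> 0")
    case True
    then obtain r where r: "r \<in> S" "b r \<noteq> 0" by blast
    have "(\<Sum>i\<in>S. (if i = r then 1 / b r else 0) * b i) = (\<Sum>i\<in>S. if i = r then 1 else 0)"
      using r(2) by (intro sum.cong) auto
    also have "\<dots> = 1" using "0.prems" r(1) by simp
    finally show ?thesis
      by (intro disjI2 exI[of _ "\<lambda>i. if i = r then 1 / b r else 0"]) simp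
  qed auto
next
  case (Suc l)
  show ?case
  proof (cases "\<exists>r\<in>S. G r l \<noteq> 0")
    case False
    then have "\<forall>i\<in>S. G i l = 0" by blast
    with Suc.IH[OF Suc.prems, of G b] show ?thesis
      by (auto simp: less_Suc_eq)
  next
    case True
    \<comment> \<open>Eliminate column l with pivot row r.  A solution of the reduced system on S - {r}
      extends by solving row r for the new unknown; a certificate extends by giving row r
      the multiplier that cancels column l.\<close>
    then obtain r where r: "r \<in> S" "G r l \<noteq> 0" by blast
    define c where "c i = G i l / G r l" for i
    define G' where "G' i j = G i j - c i * G r j" for i j
    define S' where "S' = S - {r}"
    have S: "S = insert r S'" "r \<notin> S'" "finite S'" using r Suc.prems by (auto simp: S'_def)
    have pivot: "c i * G r l = G i l" for i using r(2) by (simp add: c_def)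
    from Suc.IH[OF S(3), of G' "\<lambda>i. b i - c i * b r"] show ?thesis
    proof (elim disjE exE)
      fix d assume d: "\<forall>i\<in>S'. (\<Sum>j<l. G' i j * d j) = b i - c i * b r"
      define R where "R = (\<Sum>j<l. G r j * d j)"
      have row: "(\<Sum>j<Suc l. G i j * (d(l := (b r - R) / G r l)) j)
                   = (\<Sum>j<l. G i j * d j) + c i * (b r - R)" for i
        using r(2) by (simp add: c_def)
      have "(\<Sum>j<Suc l. G i j * (d(l := (b r - R) / G r l)) j) = b i" if "i \<in> S" for i
      proof (cases "i = r")
        case True then show ?thesis using r(2) by (simp add: row R_def c_def)
      next
        case False
        then have "(\<Sum>j<l. G i j * d j) - c i * R = b i - c i * b r"
          using d that by (simp add: S'_def G'_def R_def algebra_simps sum_subtractf sum_distrib_left)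
        then show ?thesis by (simp only: row) (simp add: algebra_simps)
      qed
      then show ?thesis by blast
    next
      fix x
      assume x: "(\<forall>j<l. (\<Sum>i\<in>S'. x i * G' i j) = 0) \<and> (\<Sum>i\<in>S'. x i * (b i - c i * b r)) = 1"
      define X where "X = (\<Sum>i\<in>S'. x i * c i)"
      have lift: "(\<Sum>i\<in>S. (x(r := - X)) i * f i) = (\<Sum>i\<in>S'. x i * (f i - c i * f r))" for f
      proof -
        have "(\<Sum>i\<in>S'. (x(r := - X)) i * f i) = (\<Sum>i\<in>S'. x i * f i)"
          using S(2) by (intro sum.cong) auto
        then show ?thesis using S
          by (simp add: X_def algebra_simps sum_subtractf sum_distrib_left)
      qed
      have "(\<Sum>i\<in>S. (x(r := - X)) i * G i j) = 0" if "j < Suc l" for j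
      proof (cases "j = l")
        case True then show ?thesis unfolding lift by (simp add: pivot)
      next
        case False then show ?thesis unfolding lift using x that by (simp add: G'_def)
      qed
      moreover have "(\<Sum>i\<in>S. (x(r := - X)) i * b i) = 1" unfolding lift using x by simp
      ultimately show ?thesis by blast
    qed
  qed
qed

lemma UNIV_bit: "(UNIV :: bit set) = {0, 1}"
  by (auto intro: bit.exhaust)

lemma card_UNIV_bit: "card (UNIV :: bit set) = 2"
  by (simp add: UNIV_bit)

lemma card_Sigma_PiE_const_card:
  assumes "finite T" "finite B" "\<And>S. S \<in> T \<Longrightarrow> finite S \<and> card S = u"
  shows "card {(S, s). S \<in> T \<and> s \<in> S \<rightarrow>\<^sub>E B} = card T * card B ^ u"
proof -
  have "{(S, s). S \<in> T \<and> s \<in> S \<rightarrow>\<^sub>E B} = (SIGMA S:T. S \<rightarrow>\<^sub>E B)"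
    by auto
  also have "card \<dots> = (\<Sum>S\<in>T. card (S \<rightarrow>\<^sub>E B))"
    using assms by (simp add: card_SigmaI finite_PiE)
  also have "\<dots> = (\<Sum>S\<in>T. card B ^ u)"
    using assms by (intro sum.cong) (auto simp: card_PiE)
  finally show ?thesis by simp
qed

lemma card_supersets_of_card:
  assumes "finite A" "T \<subseteq> A" "card T \<le> u"
  shows "card {S. T \<subseteq> S \<and> S \<subseteq> A \<and> card S = u} = (card A - card T) choose (u - card T)"
proof -
  have fT: "finite T" using assms finite_subset by blast
  have "bij_betw (\<lambda>B. B \<union> T) {B. B \<subseteq> A - T \<and> card B = u - card T}
          {S. T \<subseteq> S \<and> S \<subseteq> A \<and> card S = u}"
  proof (rule bij_betw_byWitness[where f' = "\<lambda>S. S - T"])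
    show "(\<lambda>B. B \<union> T) ` {B. B \<subseteq> A - T \<and> card B = u - card T}
            \<subseteq> {S. T \<subseteq> S \<and> S \<subseteq> A \<and> card S = u}"
    proof clarify
      fix B assume B: "B \<subseteq> A - T" "card B = u - card T"
      then have "card (B \<union> T) = card B + card T"
        using fT assms(1) by (intro card_Un_disjoint) (auto dest: finite_subset)
      then show "T \<subseteq> B \<union> T \<and> B \<union> T \<subseteq> A \<and> card (B \<union> T) = u"
        using B assms by auto
    qed
    show "(\<lambda>S. S - T) ` {S. T \<subseteq> S \<and> S \<subseteq> A \<and> card S = u}
            \<subseteq> {B. B \<subseteq> A - T \<and> card B = u - card T}"
      using fT by (auto simp: card_Diff_subset)
  qed auto
  then have "card {S. T \<subseteq> S \<and> S \<subseteq> A \<and> card S = u}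
             = card {B. B \<subseteq> A - T \<and> card B = u - card T}"
    by (simp add: bij_betw_same_card)
  also have "\<dots> = (card A - card T) choose (u - card T)"
    using assms fT by (simp add: n_subsets card_Diff_subset)
  finally show ?thesis .
qed

lemma card_defect_outcomes_supersets:
  assumes "T \<subseteq> {0..<n}" "card T \<le> u"
  shows "card {(S, s) \<in> defect_outcomes n u. T \<subseteq> S}
           = ((n - card T) choose (u - card T)) * 2 ^ u"
proof -
  have "{(S, s) \<in> defect_outcomes n u. T \<subseteq> S} =
        {(S, s). S \<in> {S. T \<subseteq> S \<and> S \<subseteq> {0..<n} \<and> card S = u} \<and> s \<in> S \<rightarrow>\<^sub>E UNIV}"
    by (auto simp: defect_outcomes_def)
  also have "card \<dots> = card {S. T \<subseteq> S \<and> S \<subseteq> {0..<n} \<and> card S = u} * 2 ^ u"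
    by (rule card_Sigma_PiE_const_card[where B = "UNIV :: bit set", unfolded card_UNIV_bit])
       (auto simp: UNIV_bit dest: finite_subset)
  finally show ?thesis
    using card_supersets_of_card[OF _ assms] by simp
qed

corollary card_defect_outcomes: "card (defect_outcomes n u) = (n choose u) * 2 ^ u"
  using card_defect_outcomes_supersets[of "{}" n u] by simp

lemma finite_defect_outcomes: "finite (defect_outcomes n u)"
proof -
  have "defect_outcomes n u \<subseteq> (SIGMA S:Pow {0..<n}. S \<rightarrow>\<^sub>E UNIV)"
    by (auto simp: defect_outcomes_def)
  moreover have "finite (SIGMA S:Pow {0..<n}. S \<rightarrow>\<^sub>E (UNIV :: bit set))"
    by (intro finite_SigmaI finite_PiE) (auto simp: UNIV_bit dest: finite_subset)
  ultimately show ?thesis by (rule finite_subset)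
qed

definition support :: "nat \<Rightarrow> (nat \<Rightarrow> 'a::zero) \<Rightarrow> nat set" where
  "support n x = {i. i < n \<and> x i \<noteq> 0}"

lemma hweight_eq_card_support: "hweight n x = card (support n x)"
  by (simp add: hweight_def support_def)

lemma finite_dual_code: "finite (dual_code n l G0)"
  unfolding dual_code_def
  by (rule finite_subset[OF _ finite_PiE[of "{0..<n}" "\<lambda>_. UNIV"]]) (auto simp: UNIV_bit)

lemma dual_codeword_if_not_encodable:
  assumes S: "S \<subseteq> {0..<n}" and not_enc: "\<not> encodable l k G0 G1 m S s"
  obtains c where "c \<in> dual_code n l G0" "0 < hweight n c" "support n c \<subseteq> S"
proof -
  define b where "b i = (\<Sum>j<k. G1 i j * m j) + s i" for i
  have fS: "finite S" using S finite_subset by blast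
  from fredholm_alternative[OF fS, where l = l and G = G0 and b = b] show thesis
  proof (elim disjE exE conjE)
    fix d assume "\<forall>i\<in>S. (\<Sum>j<l. G0 i j * d j) = b i"
    then have "\<forall>i\<in>S. (\<Sum>j<l. G0 i j * restrict d {0..<l} j) = b i"
      by simp
    then have "encodable l k G0 G1 m S s"
      unfolding encodable_def b_def by (intro bexI[of _ "restrict d {0..<l}"]) auto
    with not_enc show thesis by contradiction
  next
    fix x
    assume orth: "\<forall>j<l. (\<Sum>i\<in>S. x i * G0 i j) = 0" and odd: "(\<Sum>i\<in>S. x i * b i) = 1"
    define c where "c = restrict (\<lambda>i. if i \<in> S then x i else 0) {0..<n}"
    have c_sum: "(\<Sum>i<n. G0 i j * c i) = (\<Sum>i\<in>S. x i * G0 i j)" for j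
    proof -
      have "(\<Sum>i<n. G0 i j * c i) = (\<Sum>i\<in>S. G0 i j * c i)"
        using S by (intro sum.mono_neutral_right) (auto simp: c_def)
      also have "\<dots> = (\<Sum>i\<in>S. x i * G0 i j)"
        using S by (intro sum.cong) (auto simp: c_def mult.commute)
      finally show ?thesis .
    qed
    have "c \<in> dual_code n l G0"
      unfolding dual_code_def mem_Collect_eq c_sum by (intro conjI orth) (simp add: c_def)
    moreover have "support n c \<subseteq> S"
      by (auto simp: support_def c_def split: if_splits)
    moreover have "0 < hweight n c"
    proof -
      obtain i where "i \<in> S" "x i \<noteq> 0"
        using odd by (metis (no_types, lifting) mult_eq_0_iff sum.neutral zero_neq_one)
      then have "i \<in> support n c" using S by (auto simp: support_def c_def)
      then show ?thesis by (auto simp: hweight_eq_card_support support_def card_gt_0_iff)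
    qed
    ultimately show thesis using that by blast
  qed
qed

lemma card_not_encodable_le:
  "card {(S, s) \<in> defect_outcomes n u. \<not> encodable l k G0 G1 m S s}
     \<le> (\<Sum>c\<in>{c \<in> dual_code n l G0. 0 < hweight n c \<and> hweight n c \<le> u}.
          (n - hweight n c) choose (u - hweight n c)) * 2 ^ u"
    (is "card ?F \<le> (\<Sum>c\<in>?C. _) * _")
proof -
  define A where "A c = {(S, s) \<in> defect_outcomes n u. support n c \<subseteq> S}"
    for c :: "nat \<Rightarrow> bit"
  have "?F \<subseteq> (\<Union>c\<in>?C. A c)"
  proof clarify
    fix S s assume outcome: "(S, s) \<in> defect_outcomes n u" and "\<not> encodable l k G0 G1 m S s"
    then have S: "S \<subseteq> {0..<n}" "card S = u" by (auto simp: defect_outcomes_def)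
    obtain c where "c \<in> dual_code n l G0" "0 < hweight n c" "support n c \<subseteq> S"
      using dual_codeword_if_not_encodable[OF S(1) \<open>\<not> encodable l k G0 G1 m S s\<close>] .
    moreover from this have "hweight n c \<le> u"
      using S by (metis card_mono finite_atLeastLessThan finite_subset hweight_eq_card_support)
    ultimately show "(S, s) \<in> (\<Union>c\<in>?C. A c)" using outcome by (auto simp: A_def)
  qed
  then have "card ?F \<le> card (\<Union>c\<in>?C. A c)"
    by (intro card_mono) (auto simp: A_def intro: finite_subset[OF _ finite_defect_outcomes])
  also have "\<dots> \<le> (\<Sum>c\<in>?C. card (A c))"
    using finite_dual_code by (intro card_UN_le) auto
  also have "\<dots> = (\<Sum>c\<in>?C. ((n - hweight n c) choose (u - hweight n c)) * 2 ^ u)"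
    unfolding A_def hweight_eq_card_support
    by (intro sum.cong refl card_defect_outcomes_supersets) (auto simp: support_def)
  finally show ?thesis by (simp add: sum_distrib_right)
qed

lemma d0_pos: "1 \<le> d0 n l G0"
proof (cases "\<exists>x\<in>dual_code n l G0. hweight n x > 0")
  case True
  let ?M = "{hweight n x | x. x \<in> dual_code n l G0 \<and> hweight n x > 0}"
  have "finite ?M" using finite_dual_code by simp
  moreover have "?M \<noteq> {}" using True by blast
  ultimately have "Min ?M \<in> ?M" by (rule Min_in)
  then show ?thesis using True by (auto simp: d0_def)
qed (simp add: d0_def)

lemma d0_le_hweight:
  assumes "x \<in> dual_code n l G0" "0 < hweight n x"
  shows "d0 n l G0 \<le> hweight n x"
  using assms finite_dual_code by (auto simp: d0_def intro!: Min_le)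

lemma sum_dual_code_by_weight:
  fixes f :: "nat \<Rightarrow> nat"
  shows "(\<Sum>c\<in>{c \<in> dual_code n l G0. 0 < hweight n c \<and> hweight n c \<le> u}. f (hweight n c))
           = (\<Sum>w = d0 n l G0..u. B0 n l G0 w * f w)"
proof -
  let ?C = "{c \<in> dual_code n l G0. 0 < hweight n c \<and> hweight n c \<le> u}"
  have "(\<Sum>c\<in>?C. f (hweight n c))
          = (\<Sum>w = d0 n l G0..u. \<Sum>c\<in>{c \<in> ?C. hweight n c = w}. f (hweight n c))"
    using finite_dual_code d0_le_hweight by (intro sum.group[symmetric]) auto
  also have "\<dots> = (\<Sum>w = d0 n l G0..u. B0 n l G0 w * f w)"
  proof (intro sum.cong refl)
    fix w assume "w \<in> {d0 n l G0..u}"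
    then have "{c \<in> ?C. hweight n c = w} = {x \<in> dual_code n l G0. hweight n x = w}"
      using d0_pos[of n l G0] by auto
    then show "(\<Sum>c\<in>{c \<in> ?C. hweight n c = w}. f (hweight n c)) = B0 n l G0 w * f w"
      by (simp add: B0_def)
  qed
  finally show ?thesis .
qed

theorem lemma1:
  fixes n l k u :: nat and G0 G1 :: "nat \<Rightarrow> nat \<Rightarrow> bit" and m :: "nat \<Rightarrow> bit"
  assumes "1 \<le> u" and "u \<le> n"
  shows "fail_prob n l k G0 G1 m u \<le>
    min ((\<Sum>w = d0 n l G0..u. real (B0 n l G0 w) * real ((n - w) choose (u - w)))
           / real (n choose u)) 1"
proof -
  define F where "F = {(S, s) \<in> defect_outcomes n u. \<not> encodable l k G0 G1 m S s}"
  define N where "N = (\<Sum>w = d0 n l G0..u. B0 n l G0 w * ((n - w) choose (u - w)))"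
  have total: "real (card (defect_outcomes n u)) = real (n choose u) * 2 ^ u"
    by (simp add: card_defect_outcomes)
  have pos: "0 < real (n choose u)" using \<open>u \<le> n\<close> by simp
  have "real (card F) \<le> real (card (defect_outcomes n u))"
    unfolding F_def of_nat_le_iff by (intro card_mono finite_defect_outcomes) auto
  then have le1: "fail_prob n l k G0 G1 m u \<le> 1"
    using pos by (simp add: fail_prob_def F_def[symmetric] total)
  have "card F \<le> N * 2 ^ u"
    using card_not_encodable_le[of n u l k G0 G1 m]
      sum_dual_code_by_weight[of "\<lambda>w. (n - w) choose (u - w)" n l G0 u]
    by (simp add: F_def N_def)
  then have "real (card F) \<le> real N * 2 ^ u"
    by (metis of_nat_le_iff of_nat_mult of_nat_numeral of_nat_power)
  then have "fail_prob n l k G0 G1 m u \<le> real N / real (n choose u)"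
    using pos by (simp add: fail_prob_def F_def[symmetric] total field_simps)
  with le1 show ?thesis by (simp add: N_def)
qed

end
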